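(* Let $N\ge2$, $d\ge1$ and consider the system $$\dot x_i(t)=\frac{\lambda_i(x)}{N}\sum_{j=1}^N M_{ij}(t)\,\phi_{ij}(x_i,x_j)\,(x_j(t)-x_i(t)),\qquad i=1,\dots,N,$$ with $x_i\in\mathbb{R}^d$, where all $M_{ij}:[0,+\infty)\to[0,1]$ are Lebesgue measurable and $\lambda_i:\mathbb{R}^{Nd}\to\mathbb{R}^+$, $\phi_{ij}:\mathbb{R}^d\times\mathbb{R}^d\to\mathbb{R}^+$ are Lipschitz continuous and strictly positive. Let $x(t)$ be a (Carathéodory) solution and let $\underline m,\overline m$ be the minimum and maximum of $\lambda_i(y)\phi_{ij}(y_i,y_j)$ over all $i,j\in\{1,\dots,N\}$ and all $y\in\mathbb{R}^{Nd}$ with $|y_k|\le\max_l|x_l(0)|$ for every $k$. Assume the Persistent Excitation condition holds with parameters $(T,\mu)$, $T,\mu>0$: for all indices $i,j$ and all $t\ge0$, $\frac1T\int_t^{t+T}M_{ij}(s)\,ds\ge\mu$. Then for all $n\in\mathbb{N}$, $$\max_{i,j}|x_i(nT)-x_j(nT)|\le C^n\max_{i,j}|x_i(0)-x_j(0)|,\qquad C=1-\frac12\left(\frac{\underline m\mu T}{N+\underline m\mu T}\right)\exp\!\left(-2\tfrac{N-1}{N}T\overline m\right).$$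
   Context: $|\cdot|$ is the Euclidean norm; $\mathbb{N}$ includes $0$. *)

theory Defs
  imports "HOL-Analysis.Analysis"
begin

text \<open>Agents are indexed by a finite type 'n (N = CARD('n)), space dimension by a
finite type 'd (d = CARD('d)). A configuration is y :: real^'d^'n, y $ i \<in> R^d.\<close>

definition rhs ::
  "('n::finite \<Rightarrow> real^'d^'n \<Rightarrow> real) \<Rightarrow> ('n \<Rightarrow> 'n \<Rightarrow> real^'d \<Rightarrow> real^'d \<Rightarrow> real)
   \<Rightarrow> ('n \<Rightarrow> 'n \<Rightarrow> real \<Rightarrow> real) \<Rightarrow> real \<Rightarrow> real^'d^'n \<Rightarrow> real^'d^'n" where
  "rhs lam phi M t y = (\<chi> i. (lam i y / real CARD('n)) *\<^sub>R
      (\<Sum>j\<in>UNIV. (M i j t * phi i j (y $ i) (y $ j)) *\<^sub>R (y $ j - y $ i)))"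

definition caratheodory_solution ::
  "('n::finite \<Rightarrow> real^'d^'n \<Rightarrow> real) \<Rightarrow> ('n \<Rightarrow> 'n \<Rightarrow> real^'d \<Rightarrow> real^'d \<Rightarrow> real)
   \<Rightarrow> ('n \<Rightarrow> 'n \<Rightarrow> real \<Rightarrow> real) \<Rightarrow> (real \<Rightarrow> real^'d^'n) \<Rightarrow> bool" where
  "caratheodory_solution lam phi M x \<longleftrightarrow>
     (\<forall>t\<ge>0. ((\<lambda>s. rhs lam phi M s (x s)) has_integral (x t - x 0)) {0..t})"

definition diam_conf :: "real^'d^'n::finite \<Rightarrow> real" where
  "diam_conf y = Max {norm (y $ i - y $ j) | i j. True}"

definition radius_conf :: "real^'d^'n::finite \<Rightarrow> real" where
  "radius_conf y = Max {norm (y $ l) | l. True}"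

definition m_low :: "('n::finite \<Rightarrow> real^'d^'n \<Rightarrow> real) \<Rightarrow> ('n \<Rightarrow> 'n \<Rightarrow> real^'d \<Rightarrow> real^'d \<Rightarrow> real)
   \<Rightarrow> real \<Rightarrow> real" where
  "m_low lam phi R = Inf {lam i y * phi i j (y $ i) (y $ j) | i j y. \<forall>k. norm (y $ k) \<le> R}"

definition m_up :: "('n::finite \<Rightarrow> real^'d^'n \<Rightarrow> real) \<Rightarrow> ('n \<Rightarrow> 'n \<Rightarrow> real^'d \<Rightarrow> real^'d \<Rightarrow> real)
   \<Rightarrow> real \<Rightarrow> real" where
  "m_up lam phi R = Sup {lam i y * phi i j (y $ i) (y $ j) | i j y. \<forall>k. norm (y $ k) \<le> R}"

end

theory Submission
  imports Defs
begin

(*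
  Fix a direction v. The projections p_i = x_i . v of the solution satisfy the linear
  consensus system p_i' = sum_j a_ij (p_j - p_i) with a_ij = lam_i M_ij phi_ij / N >= 0, so
  min_i p_i never decreases and max_i p_i never increases. Taking v = x_k(t) shows that the
  solution stays in the ball of radius max_l |x_l(0)|, hence m_low M_ij / N <= a_ij <= m_up / N
  and sum_{j ~= i} a_ij <= kappa = (N - 1) / N * m_up along the solution.

  On a period [t0, t0 + T], Gronwall's inequality keeps an agent l attaining max_i p_i at
  least e^(-kappa T) (max p - min p) above the old minimum, and persistent excitation of M_il
  passes a fraction min(1, m_low mu T / N) e^(-kappa T) of this lead on to every other agent.
  So the spread of the projections in every direction, and with it the diameter, contracts
  per period by the factor 1 - min(1, m_low mu T / N) e^(-2 kappa T), which is at most C.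

  A Caratheodory solution need not be differentiable, so the comparison arguments work with
  lower right Dini derivatives of continuous functions.
*)

section \<open>Monotonicity from right Dini derivatives, and a Gronwall inequality\<close>

lemma le_if_eventually_right_ge:
  fixes W :: "real \<Rightarrow> real"
  assumes "s \<le> t" and cont: "continuous_on {s..t} W"
    and right: "\<And>r. r \<in> {s..<t} \<Longrightarrow> eventually (\<lambda>q. W r \<le> W q) (at_right r)"
  shows "W s \<le> W t"
proof (rule ccontr)
  assume "\<not> W s \<le> W t"
  define K where "K = {s..t} \<inter> W -` {W s..}"
  define c where "c = Sup K"
  have "bdd_above K" unfolding K_def by (rule bdd_aboveI[of _ t]) auto
  moreover have "closed K" unfolding K_def by (intro continuous_closed_preimage cont) auto
  moreover have "s \<in> K" using \<open>s \<le> t\<close> by (simp add: K_def)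
  ultimately have "c \<in> K" unfolding c_def by (intro closed_contains_Sup) auto
  with \<open>\<not> W s \<le> W t\<close> have c: "c \<in> {s..<t}" "W s \<le> W c"
    by (auto simp: K_def less_le)
  from right[OF c(1)] obtain b where "c < b" and b: "\<And>q. c < q \<Longrightarrow> q < b \<Longrightarrow> W c \<le> W q"
    unfolding eventually_at_right_field by blast
  define q where "q = min ((c + b) / 2) t"
  have "c < q" "q < b" "q \<in> {s..t}" using c \<open>c < b\<close> by (auto simp: q_def min_def)
  with b[of q] c have "q \<in> K" by (simp add: K_def)
  with \<open>bdd_above K\<close> have "q \<le> c" by (simp add: c_def cSup_upper)
  with \<open>c < q\<close> show False by simp
qed

lemma le_if_right_Dini_nonneg:
  fixes Z :: "real \<Rightarrow> real"
  assumes "s \<le> t" and cont: "continuous_on {s..t} Z"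
    and Dini: "\<And>r e. r \<in> {s..<t} \<Longrightarrow> 0 < e \<Longrightarrow> eventually (\<lambda>q. Z r - e * (q - r) \<le> Z q) (at_right r)"
  shows "Z s \<le> Z t"
proof (rule field_le_epsilon)
  fix \<epsilon> :: real assume "0 < \<epsilon>"
  define e where "e = \<epsilon> / (t - s + 1)"
  have "0 < e" using \<open>0 < \<epsilon>\<close> \<open>s \<le> t\<close> by (simp add: e_def)
  have "Z s + e * (s - s) \<le> Z t + e * (t - s)"
  proof (rule le_if_eventually_right_ge[OF \<open>s \<le> t\<close>])
    show "continuous_on {s..t} (\<lambda>q. Z q + e * (q - s))" by (intro continuous_intros cont)
    fix r assume "r \<in> {s..<t}"
    from Dini[OF this \<open>0 < e\<close>] show "eventually (\<lambda>q. Z r + e * (r - s) \<le> Z q + e * (q - s)) (at_right r)"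
      by eventually_elim (simp add: algebra_simps)
  qed
  moreover have "e * (t - s) \<le> \<epsilon>"
    using \<open>0 < \<epsilon>\<close> \<open>s \<le> t\<close> by (simp add: e_def field_simps)
  ultimately show "Z s \<le> Z t + \<epsilon>" by simp
qed

lemma eventually_at_right_close_on_interval:
  fixes f :: "real \<Rightarrow> 'a::metric_space"
  assumes cont: "continuous_on {s..t} f" and "r \<in> {s..<t}" and "0 < \<epsilon>"
  shows "eventually (\<lambda>q. q \<le> t \<and> (\<forall>u \<in> {r..q}. dist (f u) (f r) < \<epsilon>)) (at_right r)"
proof -
  have "r \<in> {s..t}" using \<open>r \<in> {s..<t}\<close> by simp
  then obtain \<delta> where "0 < \<delta>" and \<delta>: "\<And>u. u \<in> {s..t} \<Longrightarrow> dist u r < \<delta> \<Longrightarrow> dist (f u) (f r) < \<epsilon>"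
    using cont \<open>0 < \<epsilon>\<close> unfolding continuous_on_iff by blast
  show ?thesis
    unfolding eventually_at_right_field
  proof (intro exI[of _ "min (r + \<delta>) t"] conjI allI impI)
    show "r < min (r + \<delta>) t" using \<open>0 < \<delta>\<close> \<open>r \<in> {s..<t}\<close> by simp
    fix q assume "r < q" "q < min (r + \<delta>) t"
    then show "q \<le> t" by simp
    show "\<forall>u \<in> {r..q}. dist (f u) (f r) < \<epsilon>"
      using \<delta> \<open>r \<in> {s..<t}\<close> \<open>r < q\<close> \<open>q < min (r + \<delta>) t\<close> by (auto simp: dist_real_def)
  qed
qed

lemma continuous_on_if_has_integral_increments:
  fixes y :: "real \<Rightarrow> 'a::banach"
  assumes "\<And>r. r \<in> {s..t} \<Longrightarrow> (g has_integral (y r - y s)) {s..r}"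
  shows "continuous_on {s..t} y"
proof (cases "s \<le> t")
  case True
  then have "g integrable_on {s..t}" using assms[of t] by (auto intro: has_integral_integrable)
  then have "continuous_on {s..t} (\<lambda>r. y s + integral {s..r} g)"
    by (intro continuous_intros indefinite_integral_continuous_1)
  moreover have "y s + integral {s..r} g = y r" if "r \<in> {s..t}" for r
    using integral_unique[OF assms[OF that]] by simp
  ultimately show ?thesis using continuous_on_eq by blast
qed simp

lemma continuous_on_Min_finite:
  fixes g :: "'i \<Rightarrow> real \<Rightarrow> real"
  assumes "finite I" "I \<noteq> {}" "\<And>i. i \<in> I \<Longrightarrow> continuous_on S (g i)"
  shows "continuous_on S (\<lambda>t. Min ((\<lambda>i. g i t) ` I))"
  using assms
proof (induction I rule: finite_ne_induct)
  case (insert i I)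
  then have "continuous_on S (\<lambda>t. min (g i t) (Min ((\<lambda>i. g i t) ` I)))"
    by (intro continuous_on_min) auto
  with insert show ?case by (simp add: Min_insert)
qed simp

lemma min_one_mult_exp_neg_le_one:
  assumes "0 \<le> c"
  shows "min 1 \<beta> * exp (- c) \<le> (1 :: real)"
proof -
  have "min 1 \<beta> * exp (- c) \<le> 1 * exp (- c)" by (intro mult_right_mono) auto
  also have "\<dots> \<le> 1" using assms by simp
  finally show ?thesis .
qed

lemma half_ratio_le_min:
  fixes a N :: real
  assumes "0 \<le> a" "0 < N"
  shows "1/2 * (a / (N + a)) \<le> min 1 (a / N)"
proof -
  have ratio: "a / (N + a) \<le> min 1 (a / N)" "0 \<le> a / (N + a)"
    using assms by (auto simp: divide_le_eq_1 intro!: min.boundedI divide_left_mono mult_pos_pos)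
  have "1/2 * (a / (N + a)) \<le> a / (N + a)"
    using ratio(2) by (rule mult_left_le_one_le) simp_all
  also note ratio(1)
  finally show ?thesis .
qed

lemma power_bound_if_step_contraction:
  fixes f :: "real \<Rightarrow> real"
  assumes "0 \<le> c" "0 \<le> T" and step: "\<And>t. 0 \<le> t \<Longrightarrow> f (t + T) \<le> c * f t"
  shows "f (real n * T) \<le> c ^ n * f 0"
proof (induction n)
  case (Suc n)
  have "f (real (Suc n) * T) = f (real n * T + T)" by (simp add: algebra_simps)
  also have "\<dots> \<le> c * f (real n * T)" using \<open>0 \<le> T\<close> by (intro step) simp
  also have "\<dots> \<le> c * (c ^ n * f 0)" using Suc.IH \<open>0 \<le> c\<close> by (rule mult_left_mono)
  finally show ?case by simp
qed simp

text \<open>The factor \<open>1 + \<kappa> * d \<le> exp (\<kappa> * d)\<close> absorbs the first-order loss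
  \<open>\<kappa> * d * y0\<close> of the increment bound, leaving only terms of order \<open>d * \<eta>\<close> and \<open>d\<^sup>2\<close>.\<close>

lemma exp_weighted_increment_lower:
  fixes E \<kappa> d H y0 y1 \<eta> e :: real
  assumes "1 \<le> E" "0 \<le> \<kappa>" "0 < d" "0 \<le> H" "0 \<le> y1"
    and increment: "y0 + H - \<kappa> * d * (y0 + \<eta>) \<le> y1"
    and small: "E * \<kappa> * \<eta> \<le> e / 2" "E * \<kappa>\<^sup>2 * (y0 + \<eta>) * d \<le> e / 2"
  shows "E * y0 + H - e * d \<le> E * exp (\<kappa> * d) * y1"
proof -
  have "E * (1 + \<kappa> * d) * (y0 + H - \<kappa> * d * (y0 + \<eta>)) \<le> E * (1 + \<kappa> * d) * y1"
    using assms by (intro mult_left_mono) auto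
  also have "\<dots> \<le> E * exp (\<kappa> * d) * y1"
    using assms by (intro mult_right_mono mult_left_mono exp_ge_add_one_self) auto
  finally have upper: "E * (1 + \<kappa> * d) * (y0 + H - \<kappa> * d * (y0 + \<eta>)) \<le> E * exp (\<kappa> * d) * y1" .
  have "d * (E * \<kappa> * \<eta>) + d * (E * \<kappa>\<^sup>2 * (y0 + \<eta>) * d) \<le> d * (e / 2) + d * (e / 2)"
    using small \<open>0 < d\<close> by (intro add_mono mult_left_mono) auto
  moreover have "0 \<le> (E - 1) * H + E * \<kappa> * d * H" using assms by simp
  ultimately have "E * y0 + H - e * d \<le> E * (1 + \<kappa> * d) * (y0 + H - \<kappa> * d * (y0 + \<eta>))"
    by (simp add: algebra_simps power2_eq_square)
  with upper show ?thesis by linarith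
qed

context
  fixes y g h :: "real \<Rightarrow> real" and s t \<kappa> :: real
  assumes "s \<le> t" and "0 \<le> \<kappa>"
    and y_increment: "\<And>a b. s \<le> a \<Longrightarrow> a \<le> b \<Longrightarrow> b \<le> t \<Longrightarrow> (g has_integral (y b - y a)) {a..b}"
    and g_lower: "\<And>r. r \<in> {s..t} \<Longrightarrow> h r - \<kappa> * y r \<le> g r"
    and h_integrable: "h integrable_on {s..t}"
    and h_nonneg: "\<And>r. r \<in> {s..t} \<Longrightarrow> 0 \<le> h r"
    and y_nonneg: "\<And>r. r \<in> {s..t} \<Longrightarrow> 0 \<le> y r"
begin

private lemma y_continuous: "continuous_on {s..t} y"
  by (rule continuous_on_if_has_integral_increments) (use y_increment in auto)

private lemma y_increment_lower:
  assumes "s \<le> a" "a \<le> b" "b \<le> t"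
  shows "integral {a..b} h - \<kappa> * integral {a..b} y \<le> y b - y a"
proof (rule has_integral_le[OF _ y_increment[OF assms] g_lower])
  have "h integrable_on {a..b}" "y integrable_on {a..b}"
    using assms integrable_on_subinterval[OF h_integrable]
      integrable_continuous_interval[OF continuous_on_subset[OF y_continuous]] by auto
  then show "((\<lambda>r. h r - \<kappa> * y r) has_integral integral {a..b} h - \<kappa> * integral {a..b} y) {a..b}"
    by (intro has_integral_diff has_integral_mult_right integrable_integral)
qed (use assms in auto)

private lemma exp_weighted_increment:
  assumes r: "r \<in> {s..<t}" "r < q" "q \<le> t"
    and close: "\<And>u. u \<in> {r..q} \<Longrightarrow> y u \<le> y r + \<eta>"
    and small: "exp (\<kappa> * (r - s)) * \<kappa> * \<eta> \<le> e / 2"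
      "exp (\<kappa> * (r - s)) * \<kappa>\<^sup>2 * (y r + \<eta>) * (q - r) \<le> e / 2"
  shows "exp (\<kappa> * (r - s)) * y r - integral {s..r} h - e * (q - r)
    \<le> exp (\<kappa> * (q - s)) * y q - integral {s..q} h"
proof -
  define H where "H = integral {r..q} h"
  have "0 \<le> H" unfolding H_def
    using r h_nonneg by (intro integral_nonneg integrable_on_subinterval[OF h_integrable]) auto
  have "integral {r..q} y \<le> integral {r..q} (\<lambda>_. y r + \<eta>)"
    using r close
    by (intro integral_le integrable_continuous_interval continuous_on_subset[OF y_continuous]) auto
  then have "\<kappa> * integral {r..q} y \<le> \<kappa> * ((q - r) * (y r + \<eta>))"
    using r \<open>0 \<le> \<kappa>\<close> by (intro mult_left_mono) simp_all
  with y_increment_lower[of r q] r have "y r + H - \<kappa> * (q - r) * (y r + \<eta>) \<le> y q"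
    unfolding H_def by (simp add: mult.assoc)
  with small r \<open>0 \<le> \<kappa>\<close> \<open>0 \<le> H\<close> y_nonneg[of q]
  have "exp (\<kappa> * (r - s)) * y r + H - e * (q - r) \<le> exp (\<kappa> * (r - s)) * exp (\<kappa> * (q - r)) * y q"
    by (intro exp_weighted_increment_lower) auto
  moreover have "exp (\<kappa> * (r - s)) * exp (\<kappa> * (q - r)) = exp (\<kappa> * (q - s))"
    by (simp add: mult_exp_exp algebra_simps)
  moreover have "integral {s..q} h = integral {s..r} h + H"
    unfolding H_def using r
    by (intro Henstock_Kurzweil_Integration.integral_combine[symmetric]
        integrable_on_subinterval[OF h_integrable]) auto
  ultimately show ?thesis by simp
qed

private lemma exp_weighted_right_Dini:
  assumes r: "r \<in> {s..<t}" and "0 < e"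
  shows "eventually (\<lambda>q. exp (\<kappa> * (r - s)) * y r - integral {s..r} h - e * (q - r)
                        \<le> exp (\<kappa> * (q - s)) * y q - integral {s..q} h) (at_right r)"
proof -
  define E where "E = exp (\<kappa> * (r - s))"
  have "0 \<le> E * \<kappa>" using \<open>0 \<le> \<kappa>\<close> by (simp add: E_def)
  define \<eta> where "\<eta> = e / (2 * (E * \<kappa> + 1))"
  have "0 < \<eta>" unfolding \<eta>_def using \<open>0 \<le> E * \<kappa>\<close> \<open>0 < e\<close> by (intro divide_pos_pos) auto
  have "E * \<kappa> * \<eta> = e / 2 * (E * \<kappa> / (E * \<kappa> + 1))"
    using \<open>0 \<le> E * \<kappa>\<close> by (simp add: \<eta>_def field_simps)
  also have "\<dots> \<le> e / 2"
    using \<open>0 \<le> E * \<kappa>\<close> \<open>0 < e\<close> by (intro mult_left_le) (simp_all add: divide_le_eq_1)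
  finally have small: "E * \<kappa> * \<eta> \<le> e / 2" .
  define A where "A = E * \<kappa>\<^sup>2 * (y r + \<eta>)"
  have "0 \<le> A" using r y_nonneg \<open>0 < \<eta>\<close> by (simp add: A_def E_def)
  have "eventually (\<lambda>q. A * (q - r) \<le> e / 2) (at_right r)"
    using \<open>0 \<le> A\<close> \<open>0 < e\<close> unfolding eventually_at_right_field
    by (intro exI[of _ "r + e / (2 * (A + 1))"]) (auto simp: field_simps add_nonneg_pos)
  with eventually_at_right_close_on_interval[OF y_continuous r \<open>0 < \<eta>\<close>] eventually_at_right_less
  show ?thesis
  proof eventually_elim
    case (elim q)
    have "y u \<le> y r + \<eta>" if "u \<in> {r..q}" for u
      using elim that by (force simp: dist_real_def)
    with elim r small show ?case by (intro exp_weighted_increment) (auto simp: E_def A_def)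
  qed
qed

lemma Gronwall_lower_bound: "exp (- \<kappa> * (t - s)) * (y s + integral {s..t} h) \<le> y t"
proof -
  have "exp (\<kappa> * (s - s)) * y s - integral {s..s} h \<le> exp (\<kappa> * (t - s)) * y t - integral {s..t} h"
  proof (rule le_if_right_Dini_nonneg[OF \<open>s \<le> t\<close>])
    show "continuous_on {s..t} (\<lambda>q. exp (\<kappa> * (q - s)) * y q - integral {s..q} h)"
      by (intro continuous_intros y_continuous indefinite_integral_continuous_1 h_integrable)
  qed (rule exp_weighted_right_Dini)
  then have "y s + integral {s..t} h \<le> exp (\<kappa> * (t - s)) * y t" by simp
  then have "exp (- \<kappa> * (t - s)) * (y s + integral {s..t} h) \<le> exp (- \<kappa> * (t - s)) * (exp (\<kappa> * (t - s)) * y t)"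
    by (rule mult_left_mono) simp
  then show ?thesis by (simp add: mult.assoc[symmetric] mult_exp_exp)
qed

end

section \<open>Linear consensus systems\<close>

locale linear_consensus =
  fixes p :: "'n::finite \<Rightarrow> real \<Rightarrow> real" and a :: "'n \<Rightarrow> 'n \<Rightarrow> real \<Rightarrow> real"
  assumes a_nonneg: "\<And>i j q. 0 \<le> q \<Longrightarrow> 0 \<le> a i j q"
    and a_locally_bounded: "\<And>b. \<exists>K. \<forall>i j. \<forall>q \<in> {0..b}. a i j q \<le> K"
    and p_increment: "\<And>i s t. 0 \<le> s \<Longrightarrow> s \<le> t \<Longrightarrow>
      ((\<lambda>q. \<Sum>j\<in>UNIV. a i j q * (p j q - p i q)) has_integral (p i t - p i s)) {s..t}"
begin

definition pmin :: "real \<Rightarrow> real" where "pmin t = Min (range (\<lambda>i. p i t))"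

definition pmax :: "real \<Rightarrow> real" where "pmax t = Max (range (\<lambda>i. p i t))"

lemma pmin_le: "pmin t \<le> p i t"
  by (simp add: pmin_def)

lemma le_pmax: "p i t \<le> pmax t"
  by (simp add: pmax_def)

lemma pmin_attained: obtains i where "pmin t = p i t"
proof -
  have "pmin t \<in> range (\<lambda>i. p i t)" unfolding pmin_def by (rule Min_in) auto
  with that show thesis by blast
qed

lemma pmax_attained: obtains i where "pmax t = p i t"
proof -
  have "pmax t \<in> range (\<lambda>i. p i t)" unfolding pmax_def by (rule Max_in) auto
  with that show thesis by blast
qed

lemma p_continuous: "0 \<le> s \<Longrightarrow> continuous_on {s..t} (p i)"
  by (rule continuous_on_if_has_integral_increments) (use p_increment in auto)

lemma pmin_continuous: "0 \<le> s \<Longrightarrow> continuous_on {s..t} pmin"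
  unfolding pmin_def by (intro continuous_on_Min_finite p_continuous) auto

lemma drift_lower_bound:
  assumes "0 \<le> q" and above: "\<And>j. m \<le> p j q" and row: "(\<Sum>j\<in>UNIV - {i}. a i j q) \<le> \<kappa>"
    and "S \<subseteq> UNIV - {i}"
  shows "(\<Sum>j\<in>S. a i j q * (p j q - m)) - \<kappa> * (p i q - m) \<le> (\<Sum>j\<in>UNIV. a i j q * (p j q - p i q))"
proof -
  have "(\<Sum>j\<in>UNIV. a i j q * (p j q - p i q)) = (\<Sum>j\<in>UNIV - {i}. a i j q * (p j q - p i q))"
    by (rule sum.mono_neutral_right) auto
  also have "\<dots> = (\<Sum>j\<in>UNIV - {i}. a i j q * (p j q - m)) - (\<Sum>j\<in>UNIV - {i}. a i j q) * (p i q - m)"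
    by (simp add: sum_subtractf sum_distrib_left sum_distrib_right algebra_simps)
  finally have drift: "(\<Sum>j\<in>UNIV. a i j q * (p j q - p i q)) = \<dots>" .
  have "(\<Sum>j\<in>S. a i j q * (p j q - m)) \<le> (\<Sum>j\<in>UNIV - {i}. a i j q * (p j q - m))"
    using assms by (intro sum_mono2) (auto intro: mult_nonneg_nonneg a_nonneg)
  moreover have "(\<Sum>j\<in>UNIV - {i}. a i j q) * (p i q - m) \<le> \<kappa> * (p i q - m)"
    using row above[of i] by (intro mult_right_mono) auto
  ultimately show ?thesis unfolding drift by linarith
qed

lemma row_sum_locally_bounded: "\<exists>L>0. \<forall>i. \<forall>q \<in> {0..b}. (\<Sum>j\<in>UNIV - {i}. a i j q) \<le> L"
proof -
  obtain K where K: "\<And>i j q. q \<in> {0..b} \<Longrightarrow> a i j q \<le> K"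
    using a_locally_bounded[of b] by blast
  show ?thesis
  proof (intro exI[of _ "real CARD('n) * max K 0 + 1"] conjI allI ballI)
    fix i q assume q: "q \<in> {0..b}"
    have "(\<Sum>j\<in>UNIV - {i}. a i j q) \<le> (\<Sum>j\<in>UNIV. a i j q)"
      using q by (intro sum_mono2) (auto intro: a_nonneg)
    also have "\<dots> \<le> (\<Sum>j\<in>(UNIV :: 'n set). max K 0)"
      using K[OF q] by (intro sum_mono) (simp add: le_max_iff_disj)
    finally show "(\<Sum>j\<in>UNIV - {i}. a i j q) \<le> real CARD('n) * max K 0 + 1" by simp
  qed (simp add: add_nonneg_pos)
qed

lemma pmin_right_Dini:
  assumes "0 \<le> r" "0 < e"
  shows "eventually (\<lambda>q. pmin r - e * (q - r) \<le> p i q) (at_right r)"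
proof -
  obtain L where "0 < L" and row: "\<forall>q \<in> {0..r + 1}. (\<Sum>j\<in>UNIV - {i}. a i j q) \<le> L"
    using row_sum_locally_bounded[of "r + 1"] by blast
  define c where "c = e / (2 * L)"
  have "0 < c" using \<open>0 < e\<close> \<open>0 < L\<close> by (simp add: c_def)
  have r: "r \<in> {r..<r + 1}" by simp
  have "eventually (\<lambda>q. q < r + 1 / L) (at_right r)"
    using \<open>0 < L\<close> by (auto simp: eventually_at_right_field intro!: exI[of _ "r + 1 / L"])
  with eventually_at_right_close_on_interval[OF p_continuous[OF \<open>0 \<le> r\<close>, of "r + 1" i] r \<open>0 < c\<close>]
    eventually_at_right_close_on_interval[OF pmin_continuous[OF \<open>0 \<le> r\<close>, of "r + 1"] r \<open>0 < c\<close>]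
    eventually_at_right_less
  show ?thesis
  proof eventually_elim
    case (elim q)
    then have q: "r < q" "q \<le> r + 1" "(q - r) * L < 1" using \<open>0 < L\<close> by (auto simp: field_simps)
    have drift: "- L * (p i r - pmin r + 2 * c) \<le> (\<Sum>j\<in>UNIV. a i j u * (p j u - p i u))"
      if u: "u \<in> {r..q}" for u
    proof -
      have "dist (p i u) (p i r) < c" "dist (pmin u) (pmin r) < c" using elim u by blast+
      then have "- L * (p i r - pmin r + 2 * c) \<le> - L * (p i u - pmin u)"
        using \<open>0 < L\<close> by (intro mult_left_mono_neg) (auto simp: dist_real_def)
      also have "\<dots> \<le> (\<Sum>j\<in>UNIV. a i j u * (p j u - p i u))"
        using drift_lower_bound[of u "pmin u" i L "{}"] pmin_le row u q \<open>0 \<le> r\<close> by simp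
      finally show ?thesis .
    qed
    have "(q - r) * (- L * (p i r - pmin r + 2 * c)) \<le> p i q - p i r"
      using has_integral_const_real[of "- L * (p i r - pmin r + 2 * c)" r q] q \<open>0 \<le> r\<close> drift
      by (intro has_integral_le[OF _ p_increment[of r q i]]) auto
    moreover have "(q - r) * L * (p i r - pmin r) \<le> p i r - pmin r"
      using q pmin_le[of r i] \<open>0 < L\<close> by (intro mult_left_le_one_le) (auto simp: mult_nonneg_nonneg)
    moreover have "(q - r) * L * (2 * c) = e * (q - r)"
      using \<open>0 < L\<close> by (simp add: c_def)
    ultimately show ?case by (simp add: algebra_simps)
  qed
qed

lemma pmin_le_later:
  assumes "0 \<le> s" "s \<le> t"
  shows "pmin s \<le> p i t"
proof -
  have "pmin s \<le> pmin t"
  proof (rule le_if_right_Dini_nonneg[OF \<open>s \<le> t\<close> pmin_continuous[OF \<open>0 \<le> s\<close>]])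
    fix r e :: real assume "r \<in> {s..<t}" "0 < e"
    then have "eventually (\<lambda>q. \<forall>i. pmin r - e * (q - r) \<le> p i q) (at_right r)"
      using \<open>0 \<le> s\<close> by (intro eventually_all_finite pmin_right_Dini) auto
    then show "eventually (\<lambda>q. pmin r - e * (q - r) \<le> pmin q) (at_right r)"
      by eventually_elim (metis pmin_attained)
  qed
  then show ?thesis using pmin_le order_trans by blast
qed

lemma linear_consensus_uminus: "linear_consensus (\<lambda>i t. - p i t) a"
proof
  fix i :: 'n and s t :: real assume "0 \<le> s" "s \<le> t"
  from has_integral_neg[OF p_increment[OF this, of i]]
  show "((\<lambda>q. \<Sum>j\<in>UNIV. a i j q * (- p j q - - p i q)) has_integral (- p i t - - p i s)) {s..t}"
    by (simp add: sum_negf[symmetric] algebra_simps)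
qed (use a_nonneg a_locally_bounded in auto)

lemma later_le_pmax:
  assumes "0 \<le> s" "s \<le> t"
  shows "p i t \<le> pmax s"
proof -
  interpret reflected: linear_consensus "\<lambda>i t. - p i t" a by (rule linear_consensus_uminus)
  obtain k where "reflected.pmin s = - p k s" by (rule reflected.pmin_attained)
  with reflected.pmin_le_later[OF assms, of i] have "p i t \<le> p k s" by simp
  also have "\<dots> \<le> pmax s" by (rule le_pmax)
  finally show ?thesis .
qed

lemma gap_Gronwall:
  assumes "0 \<le> t0" "t0 \<le> \<tau>" "0 \<le> \<kappa>"
    and row: "\<And>q. q \<in> {t0..\<tau>} \<Longrightarrow> (\<Sum>j\<in>UNIV - {i}. a i j q) \<le> \<kappa>"
    and "S \<subseteq> UNIV - {i}"
    and h: "h integrable_on {t0..\<tau>}" "\<And>q. q \<in> {t0..\<tau>} \<Longrightarrow> 0 \<le> h q"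
    and h_le: "\<And>q. q \<in> {t0..\<tau>} \<Longrightarrow> h q \<le> (\<Sum>j\<in>S. a i j q * (p j q - pmin t0))"
  shows "exp (- \<kappa> * (\<tau> - t0)) * (p i t0 - pmin t0 + integral {t0..\<tau>} h) \<le> p i \<tau> - pmin t0"
proof (rule Gronwall_lower_bound[where g = "\<lambda>q. \<Sum>j\<in>UNIV. a i j q * (p j q - p i q)"])
  fix q assume q: "q \<in> {t0..\<tau>}"
  then show "0 \<le> p i q - pmin t0" using pmin_le_later \<open>0 \<le> t0\<close> by simp
  have "h q - \<kappa> * (p i q - pmin t0) \<le> (\<Sum>j\<in>S. a i j q * (p j q - pmin t0)) - \<kappa> * (p i q - pmin t0)"
    using h_le[OF q] by simp
  also have "\<dots> \<le> (\<Sum>j\<in>UNIV. a i j q * (p j q - p i q))"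
    using q assms by (intro drift_lower_bound pmin_le_later) auto
  finally show "h q - \<kappa> * (p i q - pmin t0) \<le> (\<Sum>j\<in>UNIV. a i j q * (p j q - p i q))" .
qed (use assms p_increment in auto)

context
  fixes t0 T \<kappa> \<beta> :: real and b :: "'n \<Rightarrow> 'n \<Rightarrow> real \<Rightarrow> real"
  assumes "0 \<le> t0" "0 \<le> T" "0 \<le> \<kappa>"
    and row: "\<And>i q. q \<in> {t0..t0 + T} \<Longrightarrow> (\<Sum>j\<in>UNIV - {i}. a i j q) \<le> \<kappa>"
    and b_bounds: "\<And>i j q. q \<in> {t0..t0 + T} \<Longrightarrow> 0 \<le> b i j q \<and> b i j q \<le> a i j q"
    and b_integrable: "\<And>i j. b i j integrable_on {t0..t0 + T}"
    and b_mass: "\<And>i j. \<beta> \<le> integral {t0..t0 + T} (b i j)"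
begin

private lemma leader_gap:
  assumes "pmax t0 = p l t0" "\<tau> \<in> {t0..t0 + T}"
  shows "exp (- \<kappa> * T) * (pmax t0 - pmin t0) \<le> p l \<tau> - pmin t0"
proof -
  have "exp (- \<kappa> * (\<tau> - t0)) * (p l t0 - pmin t0 + integral {t0..\<tau>} (\<lambda>_. 0)) \<le> p l \<tau> - pmin t0"
    using assms \<open>0 \<le> t0\<close> \<open>0 \<le> \<kappa>\<close> row by (intro gap_Gronwall[where S = "{}"]) auto
  moreover have "exp (- \<kappa> * T) * (pmax t0 - pmin t0) \<le> exp (- \<kappa> * (\<tau> - t0)) * (pmax t0 - pmin t0)"
    using assms \<open>0 \<le> \<kappa>\<close> pmin_le[of t0 l] by (intro mult_right_mono) (auto intro: mult_left_mono)
  ultimately show ?thesis using assms(1) by simp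
qed

text \<open>By \<open>leader_gap\<close>, the leader \<open>l\<close> stays \<open>\<rho> = exp (- \<kappa> * T) * (pmax t0 - pmin t0)\<close>
  above the old minimum during the whole period; the coupling \<open>b i l\<close> passes at least
  \<open>min 1 \<beta> * \<rho>\<close> of this lead on to agent \<open>i\<close>, which then decays by at most \<open>exp (- \<kappa> * T)\<close>.\<close>

private lemma follower_gap:
  assumes l: "pmax t0 = p l t0" and "i \<noteq> l"
  shows "min 1 \<beta> * exp (- \<kappa> * T) * (exp (- \<kappa> * T) * (pmax t0 - pmin t0)) \<le> p i (t0 + T) - pmin t0"
proof -
  define \<rho> where "\<rho> = exp (- \<kappa> * T) * (pmax t0 - pmin t0)"
  have "0 \<le> \<rho>" using pmin_le[of t0 l] le_pmax[of l t0] by (simp add: \<rho>_def)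
  have "exp (- \<kappa> * (t0 + T - t0)) * (p i t0 - pmin t0 + integral {t0..t0 + T} (\<lambda>q. \<rho> * b i l q))
      \<le> p i (t0 + T) - pmin t0"
  proof (rule gap_Gronwall[where S = "{l}"])
    fix q assume q: "q \<in> {t0..t0 + T}"
    have "\<rho> \<le> p l q - pmin t0" unfolding \<rho>_def using l q by (rule leader_gap)
    with b_bounds[OF q, of i l] \<open>0 \<le> \<rho>\<close> have "\<rho> * b i l q \<le> (p l q - pmin t0) * a i l q"
      by (intro mult_mono) auto
    then show "\<rho> * b i l q \<le> (\<Sum>j\<in>{l}. a i j q * (p j q - pmin t0))" by (simp add: mult.commute)
    show "0 \<le> \<rho> * b i l q" using b_bounds[OF q] \<open>0 \<le> \<rho>\<close> by simp
  next
    show "(\<lambda>q. \<rho> * b i l q) integrable_on {t0..t0 + T}"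
      by (intro integrable_on_mult_right b_integrable)
  qed (use \<open>0 \<le> t0\<close> \<open>0 \<le> T\<close> \<open>0 \<le> \<kappa>\<close> row \<open>i \<noteq> l\<close> in auto)
  moreover have "min 1 \<beta> * \<rho> \<le> p i t0 - pmin t0 + integral {t0..t0 + T} (\<lambda>q. \<rho> * b i l q)"
  proof -
    have "min 1 \<beta> * \<rho> \<le> integral {t0..t0 + T} (b i l) * \<rho>"
      using b_mass[of i l] \<open>0 \<le> \<rho>\<close> by (intro mult_right_mono) auto
    then show ?thesis using pmin_le[of t0 i] by (simp add: mult.commute)
  qed
  then have "exp (- \<kappa> * T) * (min 1 \<beta> * \<rho>)
      \<le> exp (- \<kappa> * T) * (p i t0 - pmin t0 + integral {t0..t0 + T} (\<lambda>q. \<rho> * b i l q))"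
    by (rule mult_left_mono) simp
  ultimately show ?thesis by (simp add: \<rho>_def algebra_simps)
qed

private lemma gap_after_period:
  "min 1 \<beta> * exp (- 2 * \<kappa> * T) * (pmax t0 - pmin t0) \<le> p i (t0 + T) - pmin t0"
proof -
  obtain l where l: "pmax t0 = p l t0" by (rule pmax_attained)
  have "exp (- 2 * \<kappa> * T) = exp (- \<kappa> * T) * exp (- \<kappa> * T)"
    unfolding exp_add[symmetric] by (simp add: algebra_simps)
  then have "min 1 \<beta> * exp (- 2 * \<kappa> * T) * (pmax t0 - pmin t0)
      = min 1 \<beta> * exp (- \<kappa> * T) * (exp (- \<kappa> * T) * (pmax t0 - pmin t0))"
    by simp
  also have "\<dots> \<le> p i (t0 + T) - pmin t0"
  proof (cases "i = l")
    case True
    have "min 1 \<beta> * exp (- \<kappa> * T) \<le> 1"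
      using min_one_mult_exp_neg_le_one[of "\<kappa> * T" \<beta>] \<open>0 \<le> \<kappa>\<close> \<open>0 \<le> T\<close> by simp
    moreover have "0 \<le> exp (- \<kappa> * T) * (pmax t0 - pmin t0)"
      using pmin_le[of t0 l] le_pmax[of l t0] by simp
    ultimately have "min 1 \<beta> * exp (- \<kappa> * T) * (exp (- \<kappa> * T) * (pmax t0 - pmin t0))
        \<le> exp (- \<kappa> * T) * (pmax t0 - pmin t0)"
      using mult_right_mono by fastforce
    also have "\<dots> \<le> p i (t0 + T) - pmin t0"
      unfolding True using l \<open>0 \<le> T\<close> by (intro leader_gap) auto
    finally show ?thesis .
  qed (use l follower_gap in blast)
  finally show ?thesis .
qed

lemma spread_contraction:
  "pmax (t0 + T) - pmin (t0 + T) \<le> (1 - min 1 \<beta> * exp (- 2 * \<kappa> * T)) * (pmax t0 - pmin t0)"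
proof -
  obtain k where "pmin (t0 + T) = p k (t0 + T)" by (rule pmin_attained)
  with gap_after_period[of k]
  have "pmin t0 + min 1 \<beta> * exp (- 2 * \<kappa> * T) * (pmax t0 - pmin t0) \<le> pmin (t0 + T)" by simp
  moreover obtain k' where "pmax (t0 + T) = p k' (t0 + T)" by (rule pmax_attained)
  with later_le_pmax[of t0 "t0 + T" k'] \<open>0 \<le> t0\<close> \<open>0 \<le> T\<close> have "pmax (t0 + T) \<le> pmax t0" by simp
  ultimately show ?thesis by (simp add: algebra_simps)
qed

end

end

section \<open>Diameter and directional width of configurations\<close>

lemma norm_le_radius_conf: "norm (y $ l) \<le> radius_conf y"
proof -
  have "{norm (y $ l) | l. True} = range (\<lambda>l. norm (y $ l))" by auto
  then show ?thesis unfolding radius_conf_def by (intro Max_ge) auto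
qed

lemma radius_conf_nonneg: "0 \<le> radius_conf y"
  using norm_le_radius_conf[of y undefined] norm_ge_zero[of "y $ undefined"] by linarith

lemma diam_conf_eq: "diam_conf y = Max ((\<lambda>(i, j). norm (y $ i - y $ j)) ` UNIV)"
proof -
  have "{norm (y $ i - y $ j) | i j. True} = (\<lambda>(i, j). norm (y $ i - y $ j)) ` UNIV" by auto
  then show ?thesis by (simp add: diam_conf_def)
qed

lemma norm_diff_le_diam_conf: "norm (y $ i - y $ j) \<le> diam_conf y"
  unfolding diam_conf_eq by (rule Max_ge) auto

lemma diam_conf_nonneg: "0 \<le> diam_conf y"
  using norm_diff_le_diam_conf[of y undefined undefined] by simp

definition width :: "real^'d^'n::finite \<Rightarrow> real^'d \<Rightarrow> real" where
  "width y v = Max (range (\<lambda>i. y $ i \<bullet> v)) - Min (range (\<lambda>i. y $ i \<bullet> v))"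

lemma width_le_diam_conf: "width y v \<le> diam_conf y * norm v"
proof -
  have "Max (range (\<lambda>i. y $ i \<bullet> v)) \<in> range (\<lambda>i. y $ i \<bullet> v)" by (rule Max_in) auto
  then obtain i where i: "Max (range (\<lambda>i. y $ i \<bullet> v)) = y $ i \<bullet> v" by blast
  have "Min (range (\<lambda>i. y $ i \<bullet> v)) \<in> range (\<lambda>i. y $ i \<bullet> v)" by (rule Min_in) auto
  then obtain j where j: "Min (range (\<lambda>i. y $ i \<bullet> v)) = y $ j \<bullet> v" by blast
  have "width y v = (y $ i - y $ j) \<bullet> v" by (simp add: width_def i j inner_diff_left)
  also have "\<dots> \<le> norm (y $ i - y $ j) * norm v" by (rule norm_cauchy_schwarz)
  also have "\<dots> \<le> diam_conf y * norm v" by (intro mult_right_mono norm_diff_le_diam_conf) auto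
  finally show ?thesis .
qed

lemma diam_conf_le_if_width_le:
  assumes "0 \<le> c" and width: "\<And>v. width y v \<le> c * norm v"
  shows "diam_conf y \<le> c"
proof -
  have "norm (y $ i - y $ j) \<le> c" for i j
  proof -
    define v where "v = y $ i - y $ j"
    have "norm v * norm v = y $ i \<bullet> v - y $ j \<bullet> v"
      by (simp add: v_def inner_diff_left[symmetric] dot_square_norm power2_eq_square)
    also have "\<dots> \<le> width y v"
      unfolding width_def by (intro diff_mono Max_ge Min_le) auto
    also have "\<dots> \<le> c * norm v" by (rule width)
    finally have "norm v \<le> c"
      using \<open>0 \<le> c\<close> by (cases "norm v = 0") (auto simp: mult_le_cancel_right)
    then show ?thesis by (simp add: v_def)
  qed
  then show ?thesis unfolding diam_conf_eq by (intro Max.boundedI) auto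
qed

lemma compact_configurations: "compact {y :: real^'d::finite^'n::finite. \<forall>k. norm (y $ k) \<le> R}"
  unfolding compact_eq_bounded_closed
proof
  show "bounded {y :: real^'d^'n. \<forall>k. norm (y $ k) \<le> R}"
    unfolding bounded_iff
  proof (intro exI ballI)
    fix y :: "real^'d^'n" assume "y \<in> {y. \<forall>k. norm (y $ k) \<le> R}"
    have "norm y \<le> (\<Sum>k\<in>UNIV. norm (y $ k))"
      unfolding norm_vec_def by (rule L2_set_le_sum) auto
    also have "\<dots> \<le> (\<Sum>k\<in>(UNIV :: 'n set). R)"
      using \<open>y \<in> {y. \<forall>k. norm (y $ k) \<le> R}\<close> by (intro sum_mono) auto
    finally show "norm y \<le> real CARD('n) * R" by simp
  qed
  have "{y :: real^'d^'n. \<forall>k. norm (y $ k) \<le> R} = (\<Inter>k. {y. norm (y $ k) \<le> R})" by auto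
  also have "closed \<dots>" by (intro closed_INT ballI closed_Collect_le continuous_intros)
  finally show "closed {y :: real^'d^'n. \<forall>k. norm (y $ k) \<le> R}" .
qed

text \<open>Without this bound, \<open>m_up\<close> would be the junk supremum of an unbounded set.\<close>

lemma bdd_above_interaction_values:
  fixes lam :: "'n::finite \<Rightarrow> real^'d::finite^'n \<Rightarrow> real"
    and phi :: "'n \<Rightarrow> 'n \<Rightarrow> real^'d \<Rightarrow> real^'d \<Rightarrow> real"
  assumes lam: "\<And>i. continuous_on UNIV (lam i)"
    and phi: "\<And>i j. continuous_on UNIV (\<lambda>(a, b). phi i j a b)"
  shows "bdd_above {lam i y * phi i j (y $ i) (y $ j) | i j y. \<forall>k. norm (y $ k) \<le> R}"
proof -
  let ?K = "{y :: real^'d^'n. \<forall>k. norm (y $ k) \<le> R}"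
  let ?F = "\<lambda>ij y. lam (fst ij) y * phi (fst ij) (snd ij) (y $ fst ij) (y $ snd ij)"
  have "continuous_on ?K (?F (i, j))" for i j
  proof -
    have "continuous_on UNIV ((\<lambda>(a, b). phi i j a b) \<circ> (\<lambda>y :: real^'d^'n. (y $ i, y $ j)))"
      by (intro continuous_on_compose continuous_intros continuous_on_subset[OF phi]) auto
    then have "continuous_on UNIV (\<lambda>y :: real^'d^'n. phi i j (y $ i) (y $ j))" by (simp add: o_def)
    with lam[of i] have "continuous_on UNIV (?F (i, j))" by (simp add: continuous_on_mult)
    then show ?thesis by (rule continuous_on_subset) simp
  qed
  then have "bounded (\<Union>ij \<in> UNIV. ?F ij ` ?K)"
    by (intro bounded_UN ballI finite_UNIV compact_imp_bounded compact_continuous_image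
        compact_configurations) auto
  moreover have "{lam i y * phi i j (y $ i) (y $ j) | i j y. \<forall>k. norm (y $ k) \<le> R} = (\<Union>ij \<in> UNIV. ?F ij ` ?K)"
    by force
  ultimately show ?thesis by (simp add: bounded_imp_bdd_above)
qed

section \<open>Contraction along a solution\<close>

locale consensus_solution =
  fixes lam :: "'n::finite \<Rightarrow> real^'d::finite^'n \<Rightarrow> real"
    and phi :: "'n \<Rightarrow> 'n \<Rightarrow> real^'d \<Rightarrow> real^'d \<Rightarrow> real"
    and M :: "'n \<Rightarrow> 'n \<Rightarrow> real \<Rightarrow> real"
    and x :: "real \<Rightarrow> real^'d^'n"
  assumes M_measurable: "\<And>i j. M i j \<in> borel_measurable (lebesgue_on {0..})"
    and M_range: "\<And>i j t. 0 \<le> t \<Longrightarrow> 0 \<le> M i j t \<and> M i j t \<le> 1"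
    and lam_continuous: "\<And>i. continuous_on UNIV (lam i)"
    and lam_pos: "\<And>i y. 0 < lam i y"
    and phi_continuous: "\<And>i j. continuous_on UNIV (\<lambda>(a, b). phi i j a b)"
    and phi_pos: "\<And>i j a b. 0 < phi i j a b"
    and solution: "caratheodory_solution lam phi M x"
begin

definition coef :: "'n \<Rightarrow> 'n \<Rightarrow> real \<Rightarrow> real" where
  "coef i j q = lam i (x q) * M i j q * phi i j (x q $ i) (x q $ j) / real CARD('n)"

lemma x_increment:
  assumes "0 \<le> s" "s \<le> t"
  shows "((\<lambda>q. rhs lam phi M q (x q)) has_integral (x t - x s)) {s..t}"
proof -
  let ?f = "\<lambda>q. rhs lam phi M q (x q)"
  have from_0: "(?f has_integral (x r - x 0)) {0..r}" if "0 \<le> r" for r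
    using solution that unfolding caratheodory_solution_def by blast
  have "?f integrable_on {0..t}" using from_0[of t] assms by (auto intro: has_integral_integrable)
  then have "integral {0..s} ?f + integral {s..t} ?f = integral {0..t} ?f"
    using assms by (intro Henstock_Kurzweil_Integration.integral_combine) auto
  then have "integral {s..t} ?f = integral {0..t} ?f - integral {0..s} ?f"
    by (simp add: algebra_simps)
  also have "\<dots> = x t - x s"
    using integral_unique[OF from_0[of s]] integral_unique[OF from_0[of t]] assms by simp
  finally have "integral {s..t} ?f = x t - x s" .
  moreover have "?f integrable_on {s..t}"
    using \<open>?f integrable_on {0..t}\<close> assms by (intro integrable_on_subinterval) auto
  ultimately show ?thesis using integrable_integral by fastforce
qed

lemma x_continuous: "continuous_on {0..b} x"
  by (rule continuous_on_if_has_integral_increments) (use x_increment in auto)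

lemma x_bounded: obtains B where "\<And>q k. q \<in> {0..b} \<Longrightarrow> norm (x q $ k) \<le> B"
proof -
  have "bounded (x ` {0..b})"
    by (intro compact_imp_bounded compact_continuous_image x_continuous compact_Icc)
  then obtain B where B: "\<And>q. q \<in> {0..b} \<Longrightarrow> norm (x q) \<le> B" unfolding bounded_iff by blast
  show ?thesis
  proof (rule that)
    fix q k assume "q \<in> {0..b}"
    then show "norm (x q $ k) \<le> B"
      using B Finite_Cartesian_Product.norm_nth_le[of "x q" k] by fastforce
  qed
qed

lemma coef_nonneg: "0 \<le> q \<Longrightarrow> 0 \<le> coef i j q"
  unfolding coef_def using M_range[of q i j] lam_pos[of i "x q"] phi_pos[of i j "x q $ i" "x q $ j"]
  by simp

lemma coef_le_m_up:
  assumes "0 \<le> q" "\<And>k. norm (x q $ k) \<le> B"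
  shows "coef i j q \<le> m_up lam phi B / real CARD('n)"
proof -
  have "lam i (x q) * phi i j (x q $ i) (x q $ j) \<le> m_up lam phi B"
    unfolding m_up_def using assms
    by (intro cSup_upper bdd_above_interaction_values lam_continuous phi_continuous) auto
  moreover have "0 \<le> M i j q" "M i j q \<le> 1" using M_range \<open>0 \<le> q\<close> by auto
  moreover have "0 < lam i (x q) * phi i j (x q $ i) (x q $ j)" using lam_pos phi_pos by simp
  ultimately have "M i j q * (lam i (x q) * phi i j (x q $ i) (x q $ j)) \<le> 1 * m_up lam phi B"
    by (intro mult_mono) auto
  then show ?thesis unfolding coef_def by (simp add: divide_right_mono ac_simps)
qed

lemma coef_ge_m_low:
  assumes "0 \<le> q" "\<And>k. norm (x q $ k) \<le> B"
  shows "m_low lam phi B * M i j q / real CARD('n) \<le> coef i j q"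
proof -
  have "m_low lam phi B \<le> lam i (x q) * phi i j (x q $ i) (x q $ j)"
    unfolding m_low_def using assms lam_pos phi_pos
    by (intro cInf_lower) (auto intro!: bdd_belowI[of _ 0] less_imp_le)
  then have "m_low lam phi B * M i j q \<le> lam i (x q) * phi i j (x q $ i) (x q $ j) * M i j q"
    using M_range \<open>0 \<le> q\<close> by (intro mult_right_mono) auto
  then show ?thesis unfolding coef_def by (simp add: divide_right_mono ac_simps)
qed

lemma linear_consensus_projection: "linear_consensus (\<lambda>i t. x t $ i \<bullet> v) coef"
proof
  fix b :: real
  obtain B where "\<And>q k. q \<in> {0..b} \<Longrightarrow> norm (x q $ k) \<le> B" using x_bounded[where b = b] by blast
  then have "\<forall>i j. \<forall>q\<in>{0..b}. coef i j q \<le> m_up lam phi B / real CARD('n)"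
    by (auto intro: coef_le_m_up)
  then show "\<exists>K. \<forall>i j. \<forall>q\<in>{0..b}. coef i j q \<le> K" by blast
next
  fix i :: 'n and s t :: real assume "0 \<le> s" "s \<le> t"
  have "bounded_linear (\<lambda>y :: real^'d^'n. y $ i \<bullet> v)"
    by (intro bounded_linear_compose[OF bounded_linear_inner_left] bounded_linear_vec_nth)
  from has_integral_linear[OF x_increment[OF \<open>0 \<le> s\<close> \<open>s \<le> t\<close>] this]
  show "((\<lambda>q. \<Sum>j\<in>UNIV. coef i j q * (x q $ j \<bullet> v - x q $ i \<bullet> v)) has_integral (x t $ i \<bullet> v - x s $ i \<bullet> v)) {s..t}"
    by (simp add: o_def rhs_def coef_def inner_sum_left inner_diff_left sum_distrib_left
        algebra_simps diff_divide_distrib)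
qed (rule coef_nonneg)

abbreviation m_lo :: real where "m_lo \<equiv> m_low lam phi (radius_conf (x 0))"

abbreviation m_hi :: real where "m_hi \<equiv> m_up lam phi (radius_conf (x 0))"

abbreviation row_bound :: real where
  "row_bound \<equiv> (real CARD('n) - 1) / real CARD('n) * m_hi"

lemma norm_le_initial_radius:
  assumes "0 \<le> t"
  shows "norm (x t $ k) \<le> radius_conf (x 0)"
proof -
  define v where "v = x t $ k"
  interpret projection: linear_consensus "\<lambda>i t. x t $ i \<bullet> v" coef
    by (rule linear_consensus_projection)
  obtain j where j: "projection.pmax 0 = x 0 $ j \<bullet> v" by (rule projection.pmax_attained)
  have "norm v * norm v = x t $ k \<bullet> v" by (simp add: v_def dot_square_norm power2_eq_square)
  also have "\<dots> \<le> x 0 $ j \<bullet> v" using projection.later_le_pmax[of 0 t k] assms j by simp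
  also have "\<dots> \<le> norm (x 0 $ j) * norm v" by (rule norm_cauchy_schwarz)
  also have "\<dots> \<le> radius_conf (x 0) * norm v" by (intro mult_right_mono norm_le_radius_conf) simp
  finally have "norm v * norm v \<le> radius_conf (x 0) * norm v" .
  then show ?thesis
    by (cases "norm v = 0") (auto simp: mult_le_cancel_right radius_conf_nonneg v_def)
qed

lemma m_lo_nonneg: "0 \<le> m_lo"
  unfolding m_low_def
proof (rule cInf_greatest)
  show "{lam i y * phi i j (y $ i) (y $ j) |i j y. \<forall>k. norm (y $ k) \<le> radius_conf (x 0)} \<noteq> {}"
    using radius_conf_nonneg by (auto intro!: exI[of _ "0 :: real^'d^'n"])
qed (auto intro!: less_imp_le mult_pos_pos lam_pos phi_pos)

lemma m_hi_nonneg: "0 \<le> m_hi"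
proof -
  have "0 \<le> coef i i 0" for i by (rule coef_nonneg) simp
  also have "coef i i 0 \<le> m_hi / real CARD('n)" for i
    by (intro coef_le_m_up norm_le_initial_radius) simp_all
  finally show ?thesis by (simp add: zero_le_divide_iff)
qed

lemma row_bound_nonneg: "0 \<le> row_bound"
  using m_hi_nonneg by simp

lemma coef_row_sum_le: "0 \<le> q \<Longrightarrow> (\<Sum>j\<in>UNIV - {i}. coef i j q) \<le> row_bound"
proof -
  assume "0 \<le> q"
  then have "(\<Sum>j\<in>UNIV - {i}. coef i j q) \<le> (\<Sum>j\<in>UNIV - {i}. m_hi / real CARD('n))"
    by (intro sum_mono coef_le_m_up norm_le_initial_radius)
  also have "\<dots> = (real CARD('n) - 1) * (m_hi / real CARD('n))"
    by (simp add: card_Diff_singleton of_nat_diff)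
  finally show ?thesis by simp
qed

lemma M_integrable: "0 \<le> s \<Longrightarrow> M i j integrable_on {s..t}"
proof (rule measurable_bounded_by_integrable_imp_integrable)
  assume "0 \<le> s"
  then show "M i j \<in> borel_measurable (lebesgue_on {s..t})"
    by (intro measurable_restrict_mono[OF M_measurable]) auto
  show "(\<lambda>_. 1 :: real) integrable_on {s..t}" by (rule integrable_const_ivl)
  show "norm (M i j q) \<le> 1" if "q \<in> {s..t}" for q
    using M_range[of q i j] that \<open>0 \<le> s\<close> by auto
qed auto

lemma width_contraction:
  assumes "0 \<le> t0" "0 \<le> T" and PE: "\<And>i j. \<mu> * T \<le> integral {t0..t0 + T} (M i j)"
  shows "width (x (t0 + T)) v
    \<le> (1 - min 1 (m_lo * \<mu> * T / real CARD('n)) * exp (- 2 * row_bound * T)) * width (x t0) v"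
proof -
  interpret projection: linear_consensus "\<lambda>i t. x t $ i \<bullet> v" coef
    by (rule linear_consensus_projection)
  define b where "b = (\<lambda>i j q. m_lo / real CARD('n) * M i j q)"
  have "projection.pmax (t0 + T) - projection.pmin (t0 + T)
    \<le> (1 - min 1 (m_lo * \<mu> * T / real CARD('n)) * exp (- 2 * row_bound * T))
        * (projection.pmax t0 - projection.pmin t0)"
  proof (rule projection.spread_contraction[where b = b])
    fix i j q assume q: "q \<in> {t0..t0 + T}"
    then show "(\<Sum>j\<in>UNIV - {i}. coef i j q) \<le> row_bound" using assms by (intro coef_row_sum_le) auto
    show "0 \<le> b i j q \<and> b i j q \<le> coef i j q"
      using coef_ge_m_low[of q "radius_conf (x 0)" i j] norm_le_initial_radius m_lo_nonneg M_range[of q i j] q assms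
      by (auto simp: b_def)
  next
    fix i j
    show "b i j integrable_on {t0..t0 + T}"
      unfolding b_def using assms by (intro integrable_on_mult_right M_integrable)
    have "m_lo / real CARD('n) * (\<mu> * T) \<le> m_lo / real CARD('n) * integral {t0..t0 + T} (M i j)"
      using PE m_lo_nonneg by (intro mult_left_mono) auto
    then show "m_lo * \<mu> * T / real CARD('n) \<le> integral {t0..t0 + T} (b i j)"
      by (simp add: b_def)
  qed (use assms row_bound_nonneg in auto)
  then show ?thesis by (simp add: projection.pmax_def projection.pmin_def width_def)
qed

lemma contraction_factor_nonneg:
  assumes "0 \<le> T"
  shows "0 \<le> 1 - min 1 \<beta> * exp (- 2 * row_bound * T)"
proof -
  have "min 1 \<beta> * exp (- (2 * row_bound * T)) \<le> 1"
    using assms by (intro min_one_mult_exp_neg_le_one mult_nonneg_nonneg row_bound_nonneg) auto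
  then show ?thesis by simp
qed

lemma diam_contraction:
  assumes "0 \<le> t0" "0 \<le> T" and PE: "\<And>i j. \<mu> * T \<le> integral {t0..t0 + T} (M i j)"
  shows "diam_conf (x (t0 + T))
    \<le> (1 - min 1 (m_lo * \<mu> * T / real CARD('n)) * exp (- 2 * row_bound * T)) * diam_conf (x t0)"
proof (rule diam_conf_le_if_width_le)
  have contraction: "0 \<le> 1 - min 1 (m_lo * \<mu> * T / real CARD('n)) * exp (- 2 * row_bound * T)"
    using \<open>0 \<le> T\<close> by (rule contraction_factor_nonneg)
  then show "0 \<le> (1 - min 1 (m_lo * \<mu> * T / real CARD('n)) * exp (- 2 * row_bound * T)) * diam_conf (x t0)"
    by (simp add: diam_conf_nonneg)
  fix v
  have "width (x (t0 + T)) v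
    \<le> (1 - min 1 (m_lo * \<mu> * T / real CARD('n)) * exp (- 2 * row_bound * T)) * width (x t0) v"
    by (rule width_contraction[OF assms])
  also have "\<dots> \<le> (1 - min 1 (m_lo * \<mu> * T / real CARD('n)) * exp (- 2 * row_bound * T)) * (diam_conf (x t0) * norm v)"
    using width_le_diam_conf contraction by (rule mult_left_mono)
  finally show "width (x (t0 + T)) v
    \<le> (1 - min 1 (m_lo * \<mu> * T / real CARD('n)) * exp (- 2 * row_bound * T)) * diam_conf (x t0) * norm v"
    by (simp add: mult.assoc)
qed

end

theorem corollary2:
  fixes lam :: "'n::finite \<Rightarrow> real^'d::finite^'n \<Rightarrow> real"
    and phi :: "'n \<Rightarrow> 'n \<Rightarrow> real^'d \<Rightarrow> real^'d \<Rightarrow> real"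
    and M :: "'n \<Rightarrow> 'n \<Rightarrow> real \<Rightarrow> real"
    and x :: "real \<Rightarrow> real^'d^'n"
    and T \<mu> :: real
  assumes N2: "CARD('n) \<ge> 2"
    and M_meas: "\<And>i j. M i j \<in> borel_measurable (lebesgue_on {0..})"
    and M_range: "\<And>i j t. t \<ge> 0 \<Longrightarrow> 0 \<le> M i j t \<and> M i j t \<le> 1"
    and lam_lip: "\<And>i. \<exists>L. L-lipschitz_on UNIV (lam i)"
    and lam_pos: "\<And>i y. lam i y > 0"
    and phi_lip: "\<And>i j. \<exists>L. L-lipschitz_on UNIV (\<lambda>(a, b). phi i j a b)"
    and phi_pos: "\<And>i j a b. phi i j a b > 0"
    and sol: "caratheodory_solution lam phi M x"
    and T_pos: "T > 0" and mu_pos: "\<mu> > 0"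
    and PE: "\<And>i j t. t \<ge> 0 \<Longrightarrow> (1 / T) * integral {t..t+T} (M i j) \<ge> \<mu>"
  shows "\<forall>n::nat. diam_conf (x (real n * T)) \<le>
     (1 - 1/2 * ((m_low lam phi (radius_conf (x 0)) * \<mu> * T)
                 / (real CARD('n) + m_low lam phi (radius_conf (x 0)) * \<mu> * T))
          * exp (- 2 * ((real CARD('n) - 1) / real CARD('n)) * T * m_up lam phi (radius_conf (x 0)))) ^ n
       * diam_conf (x 0)"
proof
  fix n :: nat
  have lam_cont: "continuous_on UNIV (lam i)" for i
    using lam_lip[of i] lipschitz_on_continuous_on by blast
  have phi_cont: "continuous_on UNIV (\<lambda>(a, b). phi i j a b)" for i j
    using phi_lip[of i j] lipschitz_on_continuous_on by blast
  interpret consensus_solution lam phi M x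
    by unfold_locales (simp_all add: M_meas M_range lam_cont lam_pos phi_cont phi_pos sol)
  let ?N = "real CARD('n)" and ?a = "m_lo * \<mu> * T"
  let ?C = "1 - 1/2 * (?a / (?N + ?a)) * exp (- 2 * ((?N - 1) / ?N) * T * m_hi)"
  define \<epsilon> where "\<epsilon> = min 1 (?a / ?N) * exp (- 2 * row_bound * T)"
  have "0 \<le> 1 - \<epsilon>" unfolding \<epsilon>_def using T_pos by (intro contraction_factor_nonneg) simp
  have "diam_conf (x (t + T)) \<le> (1 - \<epsilon>) * diam_conf (x t)" if "0 \<le> t" for t
    unfolding \<epsilon>_def using that T_pos PE[OF that] by (intro diam_contraction) (auto simp: field_simps)
  with \<open>0 \<le> 1 - \<epsilon>\<close> T_pos have "diam_conf (x (real n * T)) \<le> (1 - \<epsilon>) ^ n * diam_conf (x 0)"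
    by (intro power_bound_if_step_contraction) auto
  also have "\<dots> \<le> ?C ^ n * diam_conf (x 0)"
  proof (intro mult_right_mono power_mono diam_conf_nonneg \<open>0 \<le> 1 - \<epsilon>\<close>)
    have "1/2 * (?a / (?N + ?a)) \<le> min 1 (?a / ?N)"
      using m_lo_nonneg mu_pos T_pos by (intro half_ratio_le_min) simp_all
    then have "1/2 * (?a / (?N + ?a)) * exp (- 2 * row_bound * T) \<le> \<epsilon>"
      unfolding \<epsilon>_def by (rule mult_right_mono) simp
    moreover have "- 2 * ((?N - 1) / ?N) * T * m_hi = - 2 * row_bound * T" by (simp add: algebra_simps)
    ultimately show "1 - \<epsilon> \<le> ?C" by simp
  qed
  finally show "diam_conf (x (real n * T)) \<le> ?C ^ n * diam_conf (x 0)" .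
qed

end
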